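(* Let $0<s\le1$ and $n\in\mathbb{N}$. Then for every $t\in\mathbb{R}$ the operator $B_{30}^{(n)}$ defined in the context satisfies, for all $v\in\dot H^s$, $$\|B_{30}^{(n)}(v,v,v)\|_{\dot H^s}\le\frac{\pi^2}{n^s}\|v\|_{\dot H^0}^2\|v\|_{\dot H^s}.$$
   Context: Write $\mathbb{Z}_0=\mathbb{Z}\setminus\{0\}$. For $s\in\mathbb{R}$, $\dot H^s$ denotes the Hilbert space of complex sequences $v=(v_k)_{k\in\mathbb{Z}_0}$ with $\|v\|_{\dot H^s}^2=\sum_{k\in\mathbb{Z}_0}|k|^{2s}|v_k|^2<\infty$. For $n\in\mathbb{N}$, $\Pi_{-n}$ is the projection $(\Pi_{-n}v)_k=0$ if $|k|\le n$ and $(\Pi_{-n}v)_k=v_k$ if $|k|>n$. For $t\in\mathbb{R}$, $$B_{30}^{(n)}(u,v,w)_k=\sum^{\mathrm{nonres}}_{k_1+k_2+k_3=k}\frac{e^{3i(k_1+k_2)(k_2+k_3)(k_3+k_1)t}}{k_1(k_1+k_2)(k_2+k_3)(k_3+k_1)}u_{k_1}(\Pi_{-n}v)_{k_2}(\Pi_{-n}w)_{k_3},\qquad k\in\mathbb{Z}_0,$$ where the sum runs over $k_1,k_2,k_3\in\mathbb{Z}_0$ with $k_1+k_2+k_3=k$ and $(k_1+k_2)(k_2+k_3)(k_3+k_1)\ne0$. *)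

theory Defs
  imports "HOL-Analysis.Analysis"
begin

text \<open>Sequences indexed by the nonzero integers are modelled as functions
  int \<Rightarrow> complex; the value at index 0 is ignored everywhere.\<close>

definition Z0 :: "int set" where
  "Z0 = {k. k \<noteq> 0}"

definition Hdot_mem :: "real \<Rightarrow> (int \<Rightarrow> complex) \<Rightarrow> bool" where
  "Hdot_mem s v \<longleftrightarrow>
     (\<lambda>k. (real_of_int \<bar>k\<bar>) powr (2 * s) * (cmod (v k))\<^sup>2) summable_on Z0"

definition Hdot_norm :: "real \<Rightarrow> (int \<Rightarrow> complex) \<Rightarrow> real" where
  "Hdot_norm s v =
     sqrt (\<Sum>\<^sub>\<infinity>k\<in>Z0. (real_of_int \<bar>k\<bar>) powr (2 * s) * (cmod (v k))\<^sup>2)"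

definition Pi_neg :: "nat \<Rightarrow> (int \<Rightarrow> complex) \<Rightarrow> (int \<Rightarrow> complex)" where
  "Pi_neg n v = (\<lambda>k. if \<bar>k\<bar> \<le> int n then 0 else v k)"

definition nonres_idx :: "int \<Rightarrow> (int \<times> int) set" where
  "nonres_idx k = {(k1, k2). k1 \<noteq> 0 \<and> k2 \<noteq> 0 \<and> k - k1 - k2 \<noteq> 0 \<and>
      (k1 + k2) * (k2 + (k - k1 - k2)) * ((k - k1 - k2) + k1) \<noteq> 0}"

definition B30 :: "nat \<Rightarrow> real \<Rightarrow> (int \<Rightarrow> complex) \<Rightarrow> (int \<Rightarrow> complex)
                     \<Rightarrow> (int \<Rightarrow> complex) \<Rightarrow> (int \<Rightarrow> complex)" where
  "B30 n t u v w = (\<lambda>k. \<Sum>\<^sub>\<infinity>(k1, k2)\<in>nonres_idx k.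
      (let k3 = k - k1 - k2;
           ph = of_int ((k1 + k2) * (k2 + k3) * (k3 + k1))
       in exp (\<i> * of_real (3 * ph * t)) /
          of_int (k1 * (k1 + k2) * (k2 + k3) * (k3 + k1))
          * u k1 * Pi_neg n v k2 * Pi_neg n w k3))"

end

theory Submission
  imports Defs
begin

text \<open>Write \<open>p = k1 + k2\<close>, \<open>q = k2 + k3\<close>, \<open>r = k3 + k1\<close>, so that \<open>p + q + r = 2 k\<close>. As
  \<open>s \<le> 1\<close>, the multiplier satisfies
  \<open>|k|^s / |k1 p q r| \<le> (|p| + |q| + |r|) / (2 |p q r|) = (1/|qr| + 1/|pr| + 1/|pq|) / 2\<close>,
  and \<open>Pi_neg n\<close> on the middle factor contributes \<open>1 \<le> (|k2| / n)^s\<close>.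
  Cauchy-Schwarz in \<open>(k1, k2)\<close> leaves the square sum of this weight, at most
  \<open>(3/4) \<cdot> 3 \<cdot> (\<pi>\<^sup>2/3)\<^sup>2 = \<pi>\<^sup>4/4\<close>, because each \<open>1/(pq)\<^sup>2\<close> is summed along an injective map
  into \<open>\<int>\<^sub>0\<^sup>2\<close>. The other square sum, summed also over \<open>k\<close>, is taken along the injective map
  \<open>(k, k1, k2) \<mapsto> (k1, k2, k3)\<close> into \<open>\<int>\<^sub>0\<^sup>3\<close> and is therefore at most
  \<open>\<parallel>v\<parallel>\<^sub>0\<^sup>4 \<parallel>v\<parallel>\<^sub>s\<^sup>2\<close>. This proves the estimate even with \<open>\<pi>\<^sup>2 / (2 n^s)\<close>.\<close>

lemma nonneg_bounded_finite_sums: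
  fixes f :: "'a \<Rightarrow> real"
  assumes "\<And>x. x \<in> A \<Longrightarrow> 0 \<le> f x"
    and "\<And>F. finite F \<Longrightarrow> F \<subseteq> A \<Longrightarrow> sum f F \<le> C"
  shows "f summable_on A" and "infsum f A \<le> C"
proof -
  show summable: "f summable_on A"
    using assms by (intro nonneg_bdd_above_summable_on bdd_aboveI2) auto
  show "infsum f A \<le> C"
    using summable assms(2) by (rule infsum_le_finite_sums)
qed

lemma sum_comp_inj_le_infsum:
  fixes f :: "'a \<Rightarrow> real"
  assumes "f summable_on A" "\<And>x. x \<in> A \<Longrightarrow> 0 \<le> f x"
    and "finite F" "inj_on \<phi> F" "\<phi> ` F \<subseteq> A"
  shows "(\<Sum>x\<in>F. f (\<phi> x)) \<le> infsum f A"
proof -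
  have "(\<Sum>x\<in>F. f (\<phi> x)) = sum f (\<phi> ` F)"
    using assms(4) by (simp add: sum.reindex)
  also have "\<dots> \<le> infsum f A"
    using assms by (intro finite_sum_le_infsum) auto
  finally show ?thesis .
qed

lemma infsum_product_le:
  fixes f :: "'a \<Rightarrow> real" and g :: "'b \<Rightarrow> real"
  assumes f: "f summable_on A" "\<And>x. x \<in> A \<Longrightarrow> 0 \<le> f x"
    and g: "g summable_on B" "\<And>y. y \<in> B \<Longrightarrow> 0 \<le> g y"
  shows "(\<lambda>(x, y). f x * g y) summable_on A \<times> B"
    and "(\<Sum>\<^sub>\<infinity>(x, y)\<in>A \<times> B. f x * g y) \<le> infsum f A * infsum g B"
proof -
  have nonneg: "0 \<le> (\<lambda>(x, y). f x * g y) z" if "z \<in> A \<times> B" for z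
    using that f(2) g(2) by (auto intro!: mult_nonneg_nonneg)
  have bound: "sum (\<lambda>(x, y). f x * g y) F \<le> infsum f A * infsum g B"
    if F: "finite F" "F \<subseteq> A \<times> B" for F
  proof -
    define X Y where "X = fst ` F" and "Y = snd ` F"
    have XY: "finite X" "X \<subseteq> A" "finite Y" "Y \<subseteq> B"
      using F by (auto simp: X_def Y_def)
    have "sum (\<lambda>(x, y). f x * g y) F \<le> sum (\<lambda>(x, y). f x * g y) (X \<times> Y)"
    proof (rule sum_mono2)
      show "F \<subseteq> X \<times> Y" unfolding X_def Y_def by (simp add: subset_fst_snd)
      show "0 \<le> (\<lambda>(x, y). f x * g y) z" if "z \<in> X \<times> Y - F" for z
        using that XY nonneg by blast
    qed (use XY in simp)
    also have "\<dots> = sum f X * sum g Y"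
      by (simp add: sum_product sum.cartesian_product case_prod_beta)
    also have "\<dots> \<le> infsum f A * infsum g B"
    proof (rule mult_mono)
      show "sum f X \<le> infsum f A" "sum g Y \<le> infsum g B"
        using XY f g by (auto intro!: finite_sum_le_infsum)
      show "0 \<le> infsum f A" "0 \<le> sum g Y"
        using XY f(2) g(2) by (auto intro!: infsum_nonneg sum_nonneg)
    qed
    finally show ?thesis .
  qed
  show "(\<lambda>(x, y). f x * g y) summable_on A \<times> B"
    using nonneg bound by (rule nonneg_bounded_finite_sums(1))
  show "(\<Sum>\<^sub>\<infinity>(x, y)\<in>A \<times> B. f x * g y) \<le> infsum f A * infsum g B"
    using nonneg bound by (rule nonneg_bounded_finite_sums(2))
qed

lemma infsum_mult_le_sqrt:
  fixes f g :: "'a \<Rightarrow> real"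
  assumes "\<And>x. x \<in> A \<Longrightarrow> 0 \<le> f x" "\<And>x. x \<in> A \<Longrightarrow> 0 \<le> g x"
    and "(\<lambda>x. (f x)\<^sup>2) summable_on A" "(\<lambda>x. (g x)\<^sup>2) summable_on A"
  shows "(\<lambda>x. f x * g x) summable_on A"
    and "(\<Sum>\<^sub>\<infinity>x\<in>A. f x * g x) \<le> sqrt (\<Sum>\<^sub>\<infinity>x\<in>A. (f x)\<^sup>2) * sqrt (\<Sum>\<^sub>\<infinity>x\<in>A. (g x)\<^sup>2)"
proof -
  have nonneg: "0 \<le> f x * g x" if "x \<in> A" for x
    using that assms(1,2) by simp
  have bound: "(\<Sum>x\<in>F. f x * g x) \<le> sqrt (\<Sum>\<^sub>\<infinity>x\<in>A. (f x)\<^sup>2) * sqrt (\<Sum>\<^sub>\<infinity>x\<in>A. (g x)\<^sup>2)"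
    if F: "finite F" "F \<subseteq> A" for F
  proof -
    have "(\<Sum>x\<in>F. f x * g x)\<^sup>2 \<le> (\<Sum>x\<in>F. (f x)\<^sup>2) * (\<Sum>x\<in>F. (g x)\<^sup>2)"
      by (rule Cauchy_Schwarz_ineq_sum)
    also have "\<dots> \<le> (\<Sum>\<^sub>\<infinity>x\<in>A. (f x)\<^sup>2) * (\<Sum>\<^sub>\<infinity>x\<in>A. (g x)\<^sup>2)"
    proof (rule mult_mono)
      show "(\<Sum>x\<in>F. (f x)\<^sup>2) \<le> (\<Sum>\<^sub>\<infinity>x\<in>A. (f x)\<^sup>2)"
        "(\<Sum>x\<in>F. (g x)\<^sup>2) \<le> (\<Sum>\<^sub>\<infinity>x\<in>A. (g x)\<^sup>2)"
        using F assms(3,4) by (auto intro!: finite_sum_le_infsum)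
    qed (auto intro!: infsum_nonneg sum_nonneg)
    finally show ?thesis by (simp add: real_le_rsqrt flip: real_sqrt_mult)
  qed
  show "(\<lambda>x. f x * g x) summable_on A"
    using nonneg bound by (rule nonneg_bounded_finite_sums(1))
  show "(\<Sum>\<^sub>\<infinity>x\<in>A. f x * g x) \<le> sqrt (\<Sum>\<^sub>\<infinity>x\<in>A. (f x)\<^sup>2) * sqrt (\<Sum>\<^sub>\<infinity>x\<in>A. (g x)\<^sup>2)"
    using nonneg bound by (rule nonneg_bounded_finite_sums(2))
qed

lemma has_sum_inverse_squares_Z0: "((\<lambda>k. 1 / (real_of_int k)\<^sup>2) has_sum pi\<^sup>2 / 3) Z0"
proof -
  have nat: "((\<lambda>m. 1 / (real m + 1)\<^sup>2) has_sum pi\<^sup>2 / 6) UNIV"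
    using inverse_squares_sums by (intro sums_nonneg_imp_has_sum) (simp_all add: add.commute)
  have pos: "((\<lambda>k. 1 / (real_of_int k)\<^sup>2) has_sum pi\<^sup>2 / 6) {0<..}"
  proof -
    have "{0<..} = (\<lambda>m. int m + 1) ` UNIV"
    proof (intro equalityI subsetI)
      fix k :: int assume "k \<in> {0<..}"
      then have "k = int (nat (k - 1)) + 1" by simp
      then show "k \<in> range (\<lambda>m. int m + 1)" by blast
    qed auto
    moreover have "inj (\<lambda>m. int m + 1)" by (auto simp: inj_def)
    ultimately show ?thesis
      using nat by (simp add: has_sum_reindex o_def add.commute)
  qed
  have neg: "((\<lambda>k. 1 / (real_of_int k)\<^sup>2) has_sum pi\<^sup>2 / 6) {..<0}"
  proof -
    have "((\<lambda>k. 1 / (real_of_int k)\<^sup>2) has_sum pi\<^sup>2 / 6) (uminus ` {0<..})"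
      using pos by (subst has_sum_reindex) (simp_all add: o_def)
    moreover have "uminus ` {0::int<..} = {..<0}"
      by auto
    ultimately show ?thesis by simp
  qed
  have "((\<lambda>k. 1 / (real_of_int k)\<^sup>2) has_sum pi\<^sup>2 / 6 + pi\<^sup>2 / 6) ({0<..} \<union> {..<0})"
    using pos neg by (rule has_sum_Un_disjoint) auto
  moreover have "{0<..} \<union> {..<0} = Z0" by (auto simp: Z0_def)
  ultimately show ?thesis by simp
qed

lemma Hdot_summand_eq:
  "real_of_int \<bar>j\<bar> powr (2 * s) * (cmod (v j))\<^sup>2 = (\<bar>real_of_int j\<bar> powr s * cmod (v j))\<^sup>2"
  by (cases "j = 0") (simp_all add: power_mult_distrib powr_power mult.commute)

lemma Hdot_mem_iff: "Hdot_mem s v \<longleftrightarrow> (\<lambda>j. (\<bar>real_of_int j\<bar> powr s * cmod (v j))\<^sup>2) summable_on Z0"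
  unfolding Hdot_mem_def Hdot_summand_eq ..

lemma Hdot_norm_eq: "Hdot_norm s v = sqrt (\<Sum>\<^sub>\<infinity>j\<in>Z0. (\<bar>real_of_int j\<bar> powr s * cmod (v j))\<^sup>2)"
  unfolding Hdot_norm_def Hdot_summand_eq ..

lemma Hdot_mem_zero_iff: "Hdot_mem 0 v \<longleftrightarrow> (\<lambda>j. (cmod (v j))\<^sup>2) summable_on Z0"
  unfolding Hdot_mem_def by (rule summable_on_cong) (simp add: Z0_def)

lemma Hdot_norm_zero_eq: "Hdot_norm 0 v = sqrt (\<Sum>\<^sub>\<infinity>j\<in>Z0. (cmod (v j))\<^sup>2)"
  unfolding Hdot_norm_def by (rule arg_cong[where f = sqrt], rule infsum_cong) (simp add: Z0_def)

lemma Hdot_mem_antimono: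
  assumes "0 \<le> r" "r \<le> s" "Hdot_mem s v"
  shows "Hdot_mem r v"
  unfolding Hdot_mem_iff
proof (rule summable_on_comparison_test)
  show "(\<lambda>j. (\<bar>real_of_int j\<bar> powr s * cmod (v j))\<^sup>2) summable_on Z0"
    using assms(3) by (simp add: Hdot_mem_iff)
  show "(\<bar>real_of_int j\<bar> powr r * cmod (v j))\<^sup>2 \<le> (\<bar>real_of_int j\<bar> powr s * cmod (v j))\<^sup>2"
    if "j \<in> Z0" for j
    using that assms(1,2)
    by (intro power_mono mult_right_mono powr_mono) (auto simp: Z0_def)
qed simp

lemma Hdot_norm_le_pointwise:
  assumes "\<And>k. k \<in> Z0 \<Longrightarrow> \<bar>real_of_int k\<bar> powr s * cmod (w k) \<le> C * sqrt (H k)"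
    and "H summable_on Z0" "\<And>k. 0 \<le> H k" "0 \<le> C"
  shows "Hdot_mem s w" and "Hdot_norm s w \<le> C * sqrt (infsum H Z0)"
proof -
  have square: "(\<bar>real_of_int k\<bar> powr s * cmod (w k))\<^sup>2 \<le> C\<^sup>2 * H k" if "k \<in> Z0" for k
  proof -
    have "(\<bar>real_of_int k\<bar> powr s * cmod (w k))\<^sup>2 \<le> (C * sqrt (H k))\<^sup>2"
      using assms(1)[OF that] by (simp add: power_mono)
    then show ?thesis
      using assms(3) by (simp add: power_mult_distrib)
  qed
  have majorant: "(\<lambda>k. C\<^sup>2 * H k) summable_on Z0"
    using assms(2) by (rule summable_on_cmult_right)
  have summable: "(\<lambda>k. (\<bar>real_of_int k\<bar> powr s * cmod (w k))\<^sup>2) summable_on Z0"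
    using majorant square zero_le_power2 by (rule summable_on_comparison_test)
  then show "Hdot_mem s w"
    by (simp add: Hdot_mem_iff)
  have "(\<Sum>\<^sub>\<infinity>k\<in>Z0. (\<bar>real_of_int k\<bar> powr s * cmod (w k))\<^sup>2) \<le> (\<Sum>\<^sub>\<infinity>k\<in>Z0. C\<^sup>2 * H k)"
    using summable majorant square by (rule infsum_mono)
  also have "\<dots> = (C * sqrt (infsum H Z0))\<^sup>2"
    using assms(3) by (simp add: infsum_cmult_right' power_mult_distrib infsum_nonneg)
  finally show "Hdot_norm s w \<le> C * sqrt (infsum H Z0)"
    unfolding Hdot_norm_eq using assms(3,4) by (intro real_le_lsqrt) (simp_all add: infsum_nonneg)
qed

lemma Hdot_norm_nonneg: "0 \<le> Hdot_norm s v"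
  by (simp add: Hdot_norm_def infsum_nonneg)

lemma nonres_idx_iff [simp]:
  "(k1, k2) \<in> nonres_idx k \<longleftrightarrow>
     k1 \<noteq> 0 \<and> k2 \<noteq> 0 \<and> k - k1 - k2 \<noteq> 0 \<and> k1 + k2 \<noteq> 0 \<and> k - k1 \<noteq> 0 \<and> k - k2 \<noteq> 0"
  by (auto simp: nonres_idx_def)

definition nonres_weight :: "int \<Rightarrow> int \<times> int \<Rightarrow> real" where
  "nonres_weight k = (\<lambda>(k1, k2).
     (1 / \<bar>real_of_int ((k - k1) * (k - k2))\<bar> + 1 / \<bar>real_of_int ((k1 + k2) * (k - k2))\<bar>
      + 1 / \<bar>real_of_int ((k1 + k2) * (k - k1))\<bar>) / 2)"

lemma nonres_multiplier_le:
  fixes k k1 p q r :: int and s :: real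
  assumes "k \<noteq> 0" "k1 \<noteq> 0" "p \<noteq> 0" "q \<noteq> 0" "r \<noteq> 0" "p + q + r = 2 * k"
    and "0 < s" "s \<le> 1"
  shows "\<bar>real_of_int k\<bar> powr s / \<bar>real_of_int (k1 * p * q * r)\<bar>
    \<le> (1 / \<bar>real_of_int (q * r)\<bar> + 1 / \<bar>real_of_int (p * r)\<bar> + 1 / \<bar>real_of_int (p * q)\<bar>) / 2"
proof -
  define K D P Q R where "K = \<bar>real_of_int k\<bar>" and "D = \<bar>real_of_int k1\<bar>"
    and "P = \<bar>real_of_int p\<bar>" and "Q = \<bar>real_of_int q\<bar>" and "R = \<bar>real_of_int r\<bar>"
  have ge1: "1 \<le> K" "1 \<le> D" "1 \<le> P" "1 \<le> Q" "1 \<le> R"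
    using assms(1-5) by (simp_all add: K_def D_def P_def Q_def R_def flip: of_int_abs)
  have "2 * real_of_int k = real_of_int p + real_of_int q + real_of_int r"
    using assms(6) by (metis of_int_add of_int_mult of_int_numeral)
  then have sum: "2 * K \<le> P + Q + R"
    unfolding K_def P_def Q_def R_def by arith
  have "K powr s \<le> K"
    using powr_mono[of s 1 K] ge1 assms(8) by simp
  moreover have "P * Q * R \<le> D * P * Q * R"
    using mult_right_mono[of 1 D "P * Q * R"] ge1 by (simp add: ac_simps)
  ultimately have "K powr s / (D * P * Q * R) \<le> K / (P * Q * R)"
    using ge1 by (intro frac_le) auto
  also have "\<dots> \<le> ((P + Q + R) / 2) / (P * Q * R)"
    using sum ge1 by (intro divide_right_mono) auto
  also have "\<dots> = (1 / (Q * R) + 1 / (P * R) + 1 / (P * Q)) / 2"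
    using ge1 by (simp add: field_simps)
  finally show ?thesis
    by (simp add: K_def D_def P_def Q_def R_def abs_mult)
qed

definition B30_term :: "nat \<Rightarrow> real \<Rightarrow> (int \<Rightarrow> complex) \<Rightarrow> (int \<Rightarrow> complex)
    \<Rightarrow> (int \<Rightarrow> complex) \<Rightarrow> int \<Rightarrow> int \<times> int \<Rightarrow> complex" where
  "B30_term n t u v w k = (\<lambda>(k1, k2).
      (let k3 = k - k1 - k2;
           ph = of_int ((k1 + k2) * (k2 + k3) * (k3 + k1))
       in exp (\<i> * of_real (3 * ph * t)) /
          of_int (k1 * (k1 + k2) * (k2 + k3) * (k3 + k1))
          * u k1 * Pi_neg n v k2 * Pi_neg n w k3))"

lemma B30_eq_infsum: "B30 n t u v w k = (\<Sum>\<^sub>\<infinity>z\<in>nonres_idx k. B30_term n t u v w k z)"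
  unfolding B30_def B30_term_def ..

lemma norm_B30_term:
  "cmod (B30_term n t u v w k (k1, k2))
     = cmod (u k1) * cmod (Pi_neg n v k2) * cmod (Pi_neg n w (k - k1 - k2))
       / \<bar>real_of_int (k1 * (k1 + k2) * (k - k1) * (k - k2))\<bar>"
  unfolding B30_term_def Let_def prod.case norm_mult norm_divide norm_exp_i_times norm_of_int
  by simp

lemma norm_Pi_neg_le:
  assumes "0 \<le> s" "1 \<le> n"
  shows "cmod (Pi_neg n v j) \<le> \<bar>real_of_int j\<bar> powr s / real n powr s * cmod (v j)"
proof (cases "\<bar>j\<bar> \<le> int n")
  case False
  then have "real n powr s \<le> \<bar>real_of_int j\<bar> powr s"
    using assms by (intro powr_mono2) auto
  then have "1 \<le> \<bar>real_of_int j\<bar> powr s / real n powr s"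
    using assms(2) by simp
  from mult_right_mono[OF this norm_ge_zero[of "v j"]] show ?thesis
    using False by (simp add: Pi_neg_def)
qed (simp add: Pi_neg_def)

lemma norm_B30_term_le:
  assumes "0 < s" "s \<le> 1" "1 \<le> n" "k \<noteq> 0" "z \<in> nonres_idx k"
  shows "\<bar>real_of_int k\<bar> powr s * cmod (B30_term n t u v w k z)
    \<le> nonres_weight k z / real n powr s
       * (cmod (u (fst z)) * (\<bar>real_of_int (snd z)\<bar> powr s * cmod (v (snd z)))
          * cmod (w (k - fst z - snd z)))"
proof -
  obtain k1 k2 where z: "z = (k1, k2)" by fastforce
  define den where "den = \<bar>real_of_int (k1 * (k1 + k2) * (k - k1) * (k - k2))\<bar>"
  have multiplier: "\<bar>real_of_int k\<bar> powr s / den \<le> nonres_weight k z"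
    using nonres_multiplier_le[of k k1 "k1 + k2" "k - k1" "k - k2" s] assms
    by (simp add: z den_def nonres_weight_def ac_simps)
  have v: "cmod (Pi_neg n v k2) \<le> \<bar>real_of_int k2\<bar> powr s / real n powr s * cmod (v k2)"
    using norm_Pi_neg_le assms by simp
  have w: "cmod (Pi_neg n w (k - k1 - k2)) \<le> cmod (w (k - k1 - k2))"
    by (simp add: Pi_neg_def)
  have "\<bar>real_of_int k\<bar> powr s * cmod (B30_term n t u v w k z)
      = \<bar>real_of_int k\<bar> powr s / den
        * (cmod (u k1) * cmod (Pi_neg n v k2) * cmod (Pi_neg n w (k - k1 - k2)))"
    by (simp add: z norm_B30_term den_def)
  also have "\<dots> \<le> nonres_weight k z
        * (cmod (u k1) * (\<bar>real_of_int k2\<bar> powr s / real n powr s * cmod (v k2))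
           * cmod (w (k - k1 - k2)))"
    using multiplier v w
    by (intro mult_mono mult_left_mono mult_nonneg_nonneg) (auto simp: den_def nonres_weight_def z)
  finally show ?thesis
    by (simp add: z)
qed

lemma nonres_weight_square_le:
  "(nonres_weight k (k1, k2))\<^sup>2
     \<le> 3 / 4 * (1 / (real_of_int ((k - k1) * (k - k2)))\<^sup>2
       + 1 / (real_of_int ((k1 + k2) * (k - k2)))\<^sup>2 + 1 / (real_of_int ((k1 + k2) * (k - k1)))\<^sup>2)"
proof -
  have mean: "((x + y + z) / 2)\<^sup>2 \<le> 3 / 4 * (x\<^sup>2 + y\<^sup>2 + z\<^sup>2)" for x y z :: real
    using sum_squares_ge_zero[of "x - y" "y - z"] zero_le_power2[of "x - z"]
    by (simp add: power2_eq_square field_simps)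
  from mean[of "1 / \<bar>real_of_int ((k - k1) * (k - k2))\<bar>" "1 / \<bar>real_of_int ((k1 + k2) * (k - k2))\<bar>"
      "1 / \<bar>real_of_int ((k1 + k2) * (k - k1))\<bar>"]
  show ?thesis
    by (simp only: nonres_weight_def prod.case power_divide power2_abs power_one)
qed

lemma nonres_weight_square_sum:
  shows "(\<lambda>z. (nonres_weight k z)\<^sup>2) summable_on nonres_idx k"
    and "(\<Sum>\<^sub>\<infinity>z\<in>nonres_idx k. (nonres_weight k z)\<^sup>2) \<le> pi ^ 4 / 4"
proof -
  define P where "P = (\<lambda>(p, q). 1 / (real_of_int (p * q))\<^sup>2)"
  have zeta: "(\<lambda>j. 1 / (real_of_int j)\<^sup>2) summable_on Z0"
    "(\<Sum>\<^sub>\<infinity>j\<in>Z0. 1 / (real_of_int j)\<^sup>2) = pi\<^sup>2 / 3"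
    using has_sum_inverse_squares_Z0 by (auto simp: has_sum_iff)
  have P: "P summable_on Z0 \<times> Z0" "infsum P (Z0 \<times> Z0) \<le> pi\<^sup>2 / 3 * (pi\<^sup>2 / 3)"
    using infsum_product_le[OF zeta(1) _ zeta(1)]
    unfolding P_def zeta(2) by (auto simp: power_mult_distrib)
  have P_nonneg: "0 \<le> P x" for x
    by (auto simp: P_def split: prod.split)
  define \<phi>1 \<phi>2 \<phi>3 :: "int \<times> int \<Rightarrow> int \<times> int"
    where "\<phi>1 = (\<lambda>(k1, k2). (k - k1, k - k2))" and "\<phi>2 = (\<lambda>(k1, k2). (k1 + k2, k - k2))"
      and "\<phi>3 = (\<lambda>(k1, k2). (k1 + k2, k - k1))"
  have pointwise: "(nonres_weight k z)\<^sup>2 \<le> 3 / 4 * (P (\<phi>1 z) + P (\<phi>2 z) + P (\<phi>3 z))" for z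
    using nonres_weight_square_le[of k "fst z" "snd z"]
    by (simp add: P_def \<phi>1_def \<phi>2_def \<phi>3_def case_prod_beta)
  have "sum (\<lambda>z. (nonres_weight k z)\<^sup>2) F \<le> pi ^ 4 / 4"
    if F: "finite F" "F \<subseteq> nonres_idx k" for F
  proof -
    have reindexed: "(\<Sum>z\<in>F. P (\<phi> z)) \<le> pi\<^sup>2 / 3 * (pi\<^sup>2 / 3)"
      if "inj_on \<phi> F" "\<phi> ` F \<subseteq> Z0 \<times> Z0" for \<phi>
      using sum_comp_inj_le_infsum[OF P(1) P_nonneg F(1) that] P(2) by linarith
    have "\<phi>1 ` F \<subseteq> Z0 \<times> Z0" "\<phi>2 ` F \<subseteq> Z0 \<times> Z0" "\<phi>3 ` F \<subseteq> Z0 \<times> Z0"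
      using F(2) by (auto simp: Z0_def \<phi>1_def \<phi>2_def \<phi>3_def)
    moreover have "inj_on \<phi>1 F" "inj_on \<phi>2 F" "inj_on \<phi>3 F"
      by (auto simp: inj_on_def \<phi>1_def \<phi>2_def \<phi>3_def)
    ultimately have "(\<Sum>z\<in>F. P (\<phi>1 z)) + (\<Sum>z\<in>F. P (\<phi>2 z)) + (\<Sum>z\<in>F. P (\<phi>3 z))
        \<le> 3 * (pi\<^sup>2 / 3 * (pi\<^sup>2 / 3))"
      using reindexed[of \<phi>1] reindexed[of \<phi>2] reindexed[of \<phi>3] by linarith
    moreover have "sum (\<lambda>z. (nonres_weight k z)\<^sup>2) F
        \<le> 3 / 4 * ((\<Sum>z\<in>F. P (\<phi>1 z)) + (\<Sum>z\<in>F. P (\<phi>2 z)) + (\<Sum>z\<in>F. P (\<phi>3 z)))"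
      using sum_mono[of F, OF pointwise]
      by (simp only: sum_distrib_left[symmetric] sum.distrib)
    ultimately show ?thesis
      by (simp add: power2_eq_square power4_eq_xxxx)
  qed
  note bound = this
  show "(\<lambda>z. (nonres_weight k z)\<^sup>2) summable_on nonres_idx k"
    by (rule nonneg_bounded_finite_sums(1)[OF _ bound]) simp_all
  show "(\<Sum>\<^sub>\<infinity>z\<in>nonres_idx k. (nonres_weight k z)\<^sup>2) \<le> pi ^ 4 / 4"
    by (rule nonneg_bounded_finite_sums(2)[OF _ bound]) simp_all
qed

lemma nonres_weight_mult_sum_le:
  fixes g :: "int \<times> int \<Rightarrow> real"
  assumes "\<And>z. 0 \<le> g z" "(\<lambda>z. (g z)\<^sup>2) summable_on nonres_idx k"
  shows "(\<lambda>z. nonres_weight k z * g z) summable_on nonres_idx k"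
    and "(\<Sum>\<^sub>\<infinity>z\<in>nonres_idx k. nonres_weight k z * g z)
           \<le> pi\<^sup>2 / 2 * sqrt (\<Sum>\<^sub>\<infinity>z\<in>nonres_idx k. (g z)\<^sup>2)"
proof -
  have weight_nonneg: "0 \<le> nonres_weight k z" for z
    by (simp add: nonres_weight_def split: prod.split)
  note CS = infsum_mult_le_sqrt[OF _ _ nonres_weight_square_sum(1) assms(2)]
  show "(\<lambda>z. nonres_weight k z * g z) summable_on nonres_idx k"
    using CS(1) weight_nonneg assms(1) by blast
  have "pi ^ 4 / 4 = (pi\<^sup>2 / 2)\<^sup>2"
    by (simp add: power_divide flip: power_mult)
  then have "sqrt (\<Sum>\<^sub>\<infinity>z\<in>nonres_idx k. (nonres_weight k z)\<^sup>2) \<le> pi\<^sup>2 / 2"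
    using real_sqrt_le_mono[OF nonres_weight_square_sum(2)] by simp
  then show "(\<Sum>\<^sub>\<infinity>z\<in>nonres_idx k. nonres_weight k z * g z)
      \<le> pi\<^sup>2 / 2 * sqrt (\<Sum>\<^sub>\<infinity>z\<in>nonres_idx k. (g z)\<^sup>2)"
    using CS(2) weight_nonneg assms(1)
    by (meson order_trans mult_right_mono real_sqrt_ge_zero infsum_nonneg zero_le_power2)
qed

lemma nonres_triple_square_sum:
  fixes a b c :: "int \<Rightarrow> real"
  defines "G \<equiv> \<lambda>k z. (a (fst z) * b (snd z) * c (k - fst z - snd z))\<^sup>2"
  assumes a: "(\<lambda>j. (a j)\<^sup>2) summable_on Z0" and b: "(\<lambda>j. (b j)\<^sup>2) summable_on Z0"
    and c: "(\<lambda>j. (c j)\<^sup>2) summable_on Z0"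
  shows "\<And>k. k \<in> Z0 \<Longrightarrow> G k summable_on nonres_idx k"
    and "(\<lambda>k. \<Sum>\<^sub>\<infinity>z\<in>nonres_idx k. G k z) summable_on Z0"
    and "(\<Sum>\<^sub>\<infinity>k\<in>Z0. \<Sum>\<^sub>\<infinity>z\<in>nonres_idx k. G k z)
           \<le> (\<Sum>\<^sub>\<infinity>j\<in>Z0. (a j)\<^sup>2) * ((\<Sum>\<^sub>\<infinity>j\<in>Z0. (b j)\<^sup>2) * (\<Sum>\<^sub>\<infinity>j\<in>Z0. (c j)\<^sup>2))"
proof -
  define BC where "BC = (\<lambda>(y, z). (b y)\<^sup>2 * (c z)\<^sup>2)"
  define T where "T = (\<lambda>(x, yz). (a x)\<^sup>2 * BC yz)"
  have BC: "BC summable_on Z0 \<times> Z0"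
    "infsum BC (Z0 \<times> Z0) \<le> (\<Sum>\<^sub>\<infinity>j\<in>Z0. (b j)\<^sup>2) * (\<Sum>\<^sub>\<infinity>j\<in>Z0. (c j)\<^sup>2)"
    using infsum_product_le[OF b _ c] unfolding BC_def by auto
  have BC_nonneg: "0 \<le> BC yz" for yz
    by (auto simp: BC_def split: prod.split)
  have T: "T summable_on Z0 \<times> (Z0 \<times> Z0)"
    "infsum T (Z0 \<times> (Z0 \<times> Z0)) \<le> (\<Sum>\<^sub>\<infinity>j\<in>Z0. (a j)\<^sup>2) * infsum BC (Z0 \<times> Z0)"
    using infsum_product_le[OF a _ BC(1)] BC_nonneg unfolding T_def by auto
  have T_nonneg: "0 \<le> T x" for x
    using BC_nonneg by (auto simp: T_def split: prod.split)
  define \<psi> :: "int \<times> int \<times> int \<Rightarrow> int \<times> int \<times> int"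
    where "\<psi> = (\<lambda>(k, k1, k2). (k1, k2, k - k1 - k2))"
  have G_T: "G k z = T (\<psi> (k, z))" for k z
    by (auto simp: G_def T_def BC_def \<psi>_def power_mult_distrib split: prod.split)
  have "sum (\<lambda>(k, z). G k z) F \<le> infsum T (Z0 \<times> (Z0 \<times> Z0))"
    if F: "finite F" "F \<subseteq> Sigma Z0 nonres_idx" for F
  proof -
    have "inj_on \<psi> F"
      by (auto simp: inj_on_def \<psi>_def)
    moreover have "\<psi> ` F \<subseteq> Z0 \<times> (Z0 \<times> Z0)"
      using F(2) by (auto simp: \<psi>_def Z0_def)
    ultimately show ?thesis
      using sum_comp_inj_le_infsum[OF T(1) T_nonneg F(1)] by (simp add: G_T case_prod_beta)
  qed
  note bound = this
  have G_nonneg: "0 \<le> (\<lambda>(k, z). G k z) x" for x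
    by (simp add: G_def split: prod.split)
  have Sigma: "(\<lambda>(k, z). G k z) summable_on Sigma Z0 nonres_idx"
    "(\<Sum>\<^sub>\<infinity>(k, z)\<in>Sigma Z0 nonres_idx. G k z) \<le> infsum T (Z0 \<times> (Z0 \<times> Z0))"
    using nonneg_bounded_finite_sums[OF G_nonneg bound] by simp_all
  show "\<And>k. k \<in> Z0 \<Longrightarrow> G k summable_on nonres_idx k"
    using Sigma(1) by (rule summable_on_SigmaD1)
  show "(\<lambda>k. \<Sum>\<^sub>\<infinity>z\<in>nonres_idx k. G k z) summable_on Z0"
    using Sigma(1) by (rule summable_on_Sigma_banach)
  have "(\<Sum>\<^sub>\<infinity>k\<in>Z0. \<Sum>\<^sub>\<infinity>z\<in>nonres_idx k. G k z) = (\<Sum>\<^sub>\<infinity>(k, z)\<in>Sigma Z0 nonres_idx. G k z)"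
    using Sigma(1) by (rule infsum_Sigma'_banach)
  also have "\<dots> \<le> (\<Sum>\<^sub>\<infinity>j\<in>Z0. (a j)\<^sup>2) * ((\<Sum>\<^sub>\<infinity>j\<in>Z0. (b j)\<^sup>2) * (\<Sum>\<^sub>\<infinity>j\<in>Z0. (c j)\<^sup>2))"
    using Sigma(2) T(2) BC(2) mult_left_mono[OF BC(2), of "\<Sum>\<^sub>\<infinity>j\<in>Z0. (a j)\<^sup>2"]
    by (simp add: infsum_nonneg)
  finally show "(\<Sum>\<^sub>\<infinity>k\<in>Z0. \<Sum>\<^sub>\<infinity>z\<in>nonres_idx k. G k z)
           \<le> (\<Sum>\<^sub>\<infinity>j\<in>Z0. (a j)\<^sup>2) * ((\<Sum>\<^sub>\<infinity>j\<in>Z0. (b j)\<^sup>2) * (\<Sum>\<^sub>\<infinity>j\<in>Z0. (c j)\<^sup>2))" .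
qed

lemma norm_B30_le:
  fixes u v w :: "int \<Rightarrow> complex" and k :: int and s :: real
  defines "G \<equiv> \<lambda>z. cmod (u (fst z)) * (\<bar>real_of_int (snd z)\<bar> powr s * cmod (v (snd z)))
                   * cmod (w (k - fst z - snd z))"
  assumes "0 < s" "s \<le> 1" "1 \<le> n" "k \<noteq> 0"
    and G: "(\<lambda>z. (G z)\<^sup>2) summable_on nonres_idx k"
  shows "\<bar>real_of_int k\<bar> powr s * cmod (B30 n t u v w k)
    \<le> pi\<^sup>2 / (2 * real n powr s) * sqrt (\<Sum>\<^sub>\<infinity>z\<in>nonres_idx k. (G z)\<^sup>2)"
proof -
  define c where "c = 1 / (\<bar>real_of_int k\<bar> powr s * real n powr s)"
  have k_pos: "0 < \<bar>real_of_int k\<bar> powr s"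
    using assms(5) by simp
  have G_nonneg: "0 \<le> G z" for z
    by (simp add: G_def)
  note weighted = nonres_weight_mult_sum_le[OF G_nonneg G]
  have summand: "norm (B30_term n t u v w k z) \<le> c * (nonres_weight k z * G z)"
    if "z \<in> nonres_idx k" for z
  proof -
    have "\<bar>real_of_int k\<bar> powr s * norm (B30_term n t u v w k z)
        \<le> \<bar>real_of_int k\<bar> powr s * (c * (nonres_weight k z * G z))"
      using norm_B30_term_le[OF assms(2-5) that] k_pos by (simp add: c_def G_def)
    then show ?thesis
      using k_pos by simp
  qed
  have majorant: "(\<lambda>z. c * (nonres_weight k z * G z)) summable_on nonres_idx k"
    using weighted(1) by (rule summable_on_cmult_right)
  have norm_summable: "(\<lambda>z. norm (B30_term n t u v w k z)) summable_on nonres_idx k"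
    using majorant summand norm_ge_zero by (rule summable_on_comparison_test)
  have "cmod (B30 n t u v w k) \<le> (\<Sum>\<^sub>\<infinity>z\<in>nonres_idx k. norm (B30_term n t u v w k z))"
    unfolding B30_eq_infsum using norm_summable by (rule norm_infsum_bound)
  also have "\<dots> \<le> (\<Sum>\<^sub>\<infinity>z\<in>nonres_idx k. c * (nonres_weight k z * G z))"
    using norm_summable majorant summand by (rule infsum_mono)
  also have "\<dots> = c * (\<Sum>\<^sub>\<infinity>z\<in>nonres_idx k. nonres_weight k z * G z)"
    by (rule infsum_cmult_right')
  also have "\<dots> \<le> c * (pi\<^sup>2 / 2 * sqrt (\<Sum>\<^sub>\<infinity>z\<in>nonres_idx k. (G z)\<^sup>2))"
    using weighted(2) k_pos assms(4) by (intro mult_left_mono) (auto simp: c_def)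
  finally have "\<bar>real_of_int k\<bar> powr s * cmod (B30 n t u v w k)
      \<le> \<bar>real_of_int k\<bar> powr s * (c * (pi\<^sup>2 / 2 * sqrt (\<Sum>\<^sub>\<infinity>z\<in>nonres_idx k. (G z)\<^sup>2)))"
    using k_pos by (simp add: mult_left_mono)
  also have "\<dots> = pi\<^sup>2 / (2 * real n powr s) * sqrt (\<Sum>\<^sub>\<infinity>z\<in>nonres_idx k. (G z)\<^sup>2)"
    using k_pos by (simp add: c_def)
  finally show ?thesis .
qed

lemma Hdot_norm_B30_le:
  assumes "0 < s" "s \<le> 1" "1 \<le> n"
    and "Hdot_mem 0 u" "Hdot_mem s v" "Hdot_mem 0 w"
  shows "Hdot_mem s (B30 n t u v w)"
    and "Hdot_norm s (B30 n t u v w)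
           \<le> pi\<^sup>2 / (2 * real n powr s) * (Hdot_norm 0 u * Hdot_norm s v * Hdot_norm 0 w)"
proof -
  define a b c where "a j = cmod (u j)" and "b j = \<bar>real_of_int j\<bar> powr s * cmod (v j)"
    and "c j = cmod (w j)" for j
  have a: "(\<lambda>j. (a j)\<^sup>2) summable_on Z0" and c: "(\<lambda>j. (c j)\<^sup>2) summable_on Z0"
    using assms(4,6) by (simp_all add: a_def c_def Hdot_mem_zero_iff)
  have b: "(\<lambda>j. (b j)\<^sup>2) summable_on Z0"
    using assms(5) by (simp add: b_def Hdot_mem_iff)
  define H where "H k = (\<Sum>\<^sub>\<infinity>z\<in>nonres_idx k. (a (fst z) * b (snd z) * c (k - fst z - snd z))\<^sup>2)"
    for k
  note triple = nonres_triple_square_sum[OF a b c]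
  have H_summable: "H summable_on Z0"
    using triple(2) by (simp add: H_def[abs_def])
  have H_nonneg: "0 \<le> H k" for k
    by (simp add: H_def infsum_nonneg)
  have "\<bar>real_of_int k\<bar> powr s * cmod (B30 n t u v w k) \<le> pi\<^sup>2 / (2 * real n powr s) * sqrt (H k)"
    if "k \<in> Z0" for k
    using norm_B30_le[OF assms(1-3) _ triple(1)[OF that, unfolded a_def b_def c_def]] that
    by (simp add: H_def a_def b_def c_def Z0_def)
  note pointwise = Hdot_norm_le_pointwise[OF this H_summable H_nonneg]
  show "Hdot_mem s (B30 n t u v w)"
    using pointwise(1) by simp
  have "Hdot_norm 0 u = sqrt (\<Sum>\<^sub>\<infinity>j\<in>Z0. (a j)\<^sup>2)" "Hdot_norm 0 w = sqrt (\<Sum>\<^sub>\<infinity>j\<in>Z0. (c j)\<^sup>2)"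
    by (simp_all add: a_def c_def Hdot_norm_zero_eq)
  moreover have "Hdot_norm s v = sqrt (\<Sum>\<^sub>\<infinity>j\<in>Z0. (b j)\<^sup>2)"
    by (simp add: b_def Hdot_norm_eq)
  ultimately have "sqrt (infsum H Z0) \<le> Hdot_norm 0 u * Hdot_norm s v * Hdot_norm 0 w"
    using real_sqrt_le_mono[OF triple(3)] by (simp add: H_def[abs_def] real_sqrt_mult)
  then show "Hdot_norm s (B30 n t u v w)
      \<le> pi\<^sup>2 / (2 * real n powr s) * (Hdot_norm 0 u * Hdot_norm s v * Hdot_norm 0 w)"
    using order_trans[OF pointwise(2) mult_left_mono] by simp
qed

theorem lemma7p9:
  fixes s t :: real and n :: nat and v :: "int \<Rightarrow> complex"
  assumes "0 < s" and "s \<le> 1" and "1 \<le> n" and "Hdot_mem s v"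
  shows "Hdot_mem s (B30 n t v v v) \<and>
         Hdot_norm s (B30 n t v v v)
           \<le> pi\<^sup>2 / (real n) powr s * (Hdot_norm 0 v)\<^sup>2 * Hdot_norm s v"
proof -
  have "Hdot_mem 0 v"
    using Hdot_mem_antimono[of 0 s v] assms by simp
  note trilinear = Hdot_norm_B30_le[OF assms(1-3) this assms(4) this, of t]
  have "pi\<^sup>2 / (2 * real n powr s) * (Hdot_norm 0 v * Hdot_norm s v * Hdot_norm 0 v)
      \<le> pi\<^sup>2 / real n powr s * (Hdot_norm 0 v)\<^sup>2 * Hdot_norm s v"
    using assms(3) Hdot_norm_nonneg[of 0 v] Hdot_norm_nonneg[of s v]
    by (simp add: power2_eq_square field_simps)
  then show ?thesis
    using trilinear by simp
qed

end
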